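(* For every $h>0$, the function $v(\cdot,h)$ satisfies $v_{yy}(y,h)>0$ in each of the three regions $y\ge e^{\lambda\beta h}$, $e^{(\lambda-1)\beta h}<y<e^{\lambda\beta h}$ and $(1-\lambda)e^{(\lambda-1)\beta h}\le y\le e^{(\lambda-1)\beta h}$ (using the corresponding piece of the formula). In particular the inverse Legendre transform $\inf_{y\ge(1-\lambda)e^{(\lambda-1)\beta h}}[v(y,h)+xy]$ is well defined, and the function $\pi^\dagger(y,h)$ is strictly positive for all $h>0$ and $y\ge(1-\lambda)e^{(\lambda-1)\beta h}$.
   Context: Constants: $r>0$, $\mu>r$, $\sigma>0$, $\beta>0$, $\lambda\in(0,1)$, $\kappa:=(\mu-r)/\sigma>0$, $r_{1,2}=\frac12(1\pm\sqrt{1+8r/\kappa^2})$ (so $r_1>1>0>r_2$ and $r_1(r_1-1)=r_2(r_2-1)=2r/\kappa^2$). For $h\ge0$: $C_6(h):=\frac{(1-\lambda)^{r_1-r_2}}{(r_1-r_2)\beta r}\Big[\frac{1}{1-r_2}e^{(\lambda-1)(1-r_2)\beta h}-\frac{\lambda}{\lambda(1-r_2)-(r_1-r_2)}e^{[\lambda(1-r_2)-(r_1-r_2)]\beta h}\Big]$, $C_4(h):=C_6(h)+\frac{(1-r_1)\kappa^2}{2(r_1-r_2)\beta r^2}e^{(\lambda-1)(1-r_2)\beta h}$, $C_2(h):=C_6(h)+\frac{(1-r_1)\kappa^2}{2(r_1-r_2)\beta r^2}\big[e^{(\lambda-1)(1-r_2)\beta h}-e^{\lambda(1-r_2)\beta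 h}\big]$, $C_3(h):=\frac{(r_2-1)\kappa^2}{2(r_1-r_2)\beta r^2}e^{\lambda(1-r_1)\beta h}$, $C_5(h):=\frac{(1-r_2)\kappa^2}{2(r_1-r_2)\beta r^2}\big[e^{(\lambda-1)(1-r_1)\beta h}-e^{\lambda(1-r_1)\beta h}\big]$. The dual function $v$ on $\{y\ge(1-\lambda)e^{(\lambda-1)\beta h}\}$ is $v(y,h)=C_2(h)y^{r_2}-\frac{1}{r\beta}e^{\lambda\beta h}$ if $y\ge e^{\lambda\beta h}$; $v(y,h)=C_3(h)y^{r_1}+C_4(h)y^{r_2}-\frac{y}{r\beta}+\frac{y}{r\beta}(\ln y-\lambda\beta h+\frac{\kappa^2}{2r})$ if $e^{(\lambda-1)\beta h}<y<e^{\lambda\beta h}$; $v(y,h)=C_5(h)y^{r_1}+C_6(h)y^{r_2}-\frac1rhy-\frac{1}{r\beta}e^{(\lambda-1)\beta h}$ if $(1-\lambda)e^{(\lambda-1)\beta h}\le y\le e^{(\lambda-1)\beta h}$. The feedback portfolio function is $\pi^\dagger(y,h)=\frac{\mu-r}{\sigma^2}\cdot\frac{2r}{\kappa^2}C_2(h)y^{r_2-1}$ if $y\ge e^{\lambda\beta h}$; $\frac{\mu-r}{\sigma^2}\big[\frac{2r}{\kappa^2}C_3(h)y^{r_1-1}+\frac{2r}{\kappa^2}C_4(h)y^{r_2-1}+\frac1{r\beta}\big]$ if $e^{(\lambda-1)\beta h}<y<e^{\lambda\beta h}$; $\frac{\mu-r}{\sigma^2}\big[\frac{2r}{\kappa^2}C_5(h)y^{r_1-1}+\frac{2r}{\kappa^2}C_6(h)y^{r_2-1}\big]$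 if $(1-\lambda)e^{(\lambda-1)\beta h}\le y\le e^{(\lambda-1)\beta h}$ (note $\pi^\dagger=\frac{\mu-r}{\sigma^2}yv_{yy}$). *)

theory Defs
  imports "HOL-Analysis.Analysis"
begin

definition kap :: "real \<Rightarrow> real \<Rightarrow> real \<Rightarrow> real" where
  "kap r mu sig = (mu - r) / sig"

definition r1 :: "real \<Rightarrow> real \<Rightarrow> real \<Rightarrow> real" where
  "r1 r mu sig = (1 + sqrt (1 + 8 * r / (kap r mu sig)\<^sup>2)) / 2"

definition r2 :: "real \<Rightarrow> real \<Rightarrow> real \<Rightarrow> real" where
  "r2 r mu sig = (1 - sqrt (1 + 8 * r / (kap r mu sig)\<^sup>2)) / 2"

definition C6 :: "real \<Rightarrow> real \<Rightarrow> real \<Rightarrow> real \<Rightarrow> real \<Rightarrow> real \<Rightarrow> real" where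
  "C6 r mu sig beta lam h =
     (let a = r1 r mu sig; b = r2 r mu sig in
      (1 - lam) powr (a - b) / ((a - b) * beta * r) *
      (1 / (1 - b) * exp ((lam - 1) * (1 - b) * beta * h)
       - lam / (lam * (1 - b) - (a - b)) * exp ((lam * (1 - b) - (a - b)) * beta * h)))"

definition C4 :: "real \<Rightarrow> real \<Rightarrow> real \<Rightarrow> real \<Rightarrow> real \<Rightarrow> real \<Rightarrow> real" where
  "C4 r mu sig beta lam h =
     (let a = r1 r mu sig; b = r2 r mu sig; k = kap r mu sig in
      C6 r mu sig beta lam h
      + (1 - a) * k\<^sup>2 / (2 * (a - b) * beta * r\<^sup>2) * exp ((lam - 1) * (1 - b) * beta * h))"

definition C2 :: "real \<Rightarrow> real \<Rightarrow> real \<Rightarrow> real \<Rightarrow> real \<Rightarrow> real \<Rightarrow> real" where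
  "C2 r mu sig beta lam h =
     (let a = r1 r mu sig; b = r2 r mu sig; k = kap r mu sig in
      C6 r mu sig beta lam h
      + (1 - a) * k\<^sup>2 / (2 * (a - b) * beta * r\<^sup>2) *
        (exp ((lam - 1) * (1 - b) * beta * h) - exp (lam * (1 - b) * beta * h)))"

definition C3 :: "real \<Rightarrow> real \<Rightarrow> real \<Rightarrow> real \<Rightarrow> real \<Rightarrow> real \<Rightarrow> real" where
  "C3 r mu sig beta lam h =
     (let a = r1 r mu sig; b = r2 r mu sig; k = kap r mu sig in
      (b - 1) * k\<^sup>2 / (2 * (a - b) * beta * r\<^sup>2) * exp (lam * (1 - a) * beta * h))"

definition C5 :: "real \<Rightarrow> real \<Rightarrow> real \<Rightarrow> real \<Rightarrow> real \<Rightarrow> real \<Rightarrow> real" where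
  "C5 r mu sig beta lam h =
     (let a = r1 r mu sig; b = r2 r mu sig; k = kap r mu sig in
      (1 - b) * k\<^sup>2 / (2 * (a - b) * beta * r\<^sup>2) *
        (exp ((lam - 1) * (1 - a) * beta * h) - exp (lam * (1 - a) * beta * h)))"

definition vA :: "real \<Rightarrow> real \<Rightarrow> real \<Rightarrow> real \<Rightarrow> real \<Rightarrow> real \<Rightarrow> real \<Rightarrow> real" where
  "vA r mu sig beta lam h y =
     C2 r mu sig beta lam h * y powr (r2 r mu sig) - 1 / (r * beta) * exp (lam * beta * h)"

definition vB :: "real \<Rightarrow> real \<Rightarrow> real \<Rightarrow> real \<Rightarrow> real \<Rightarrow> real \<Rightarrow> real \<Rightarrow> real" where
  "vB r mu sig beta lam h y =
     C3 r mu sig beta lam h * y powr (r1 r mu sig)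
     + C4 r mu sig beta lam h * y powr (r2 r mu sig)
     - y / (r * beta)
     + y / (r * beta) * (ln y - lam * beta * h + (kap r mu sig)\<^sup>2 / (2 * r))"

definition vC :: "real \<Rightarrow> real \<Rightarrow> real \<Rightarrow> real \<Rightarrow> real \<Rightarrow> real \<Rightarrow> real \<Rightarrow> real" where
  "vC r mu sig beta lam h y =
     C5 r mu sig beta lam h * y powr (r1 r mu sig)
     + C6 r mu sig beta lam h * y powr (r2 r mu sig)
     - 1 / r * h * y - 1 / (r * beta) * exp ((lam - 1) * beta * h)"

definition vdual :: "real \<Rightarrow> real \<Rightarrow> real \<Rightarrow> real \<Rightarrow> real \<Rightarrow> real \<Rightarrow> real \<Rightarrow> real" where
  "vdual r mu sig beta lam y h =
     (if exp (lam * beta * h) \<le> y then vA r mu sig beta lam h y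
      else if exp ((lam - 1) * beta * h) < y then vB r mu sig beta lam h y
      else vC r mu sig beta lam h y)"

definition pidag :: "real \<Rightarrow> real \<Rightarrow> real \<Rightarrow> real \<Rightarrow> real \<Rightarrow> real \<Rightarrow> real \<Rightarrow> real" where
  "pidag r mu sig beta lam y h =
     (let a = r1 r mu sig; b = r2 r mu sig; k = kap r mu sig in
      if exp (lam * beta * h) \<le> y then
        (mu - r) / sig\<^sup>2 * (2 * r / k\<^sup>2 * C2 r mu sig beta lam h * y powr (b - 1))
      else if exp ((lam - 1) * beta * h) < y then
        (mu - r) / sig\<^sup>2 * (2 * r / k\<^sup>2 * C3 r mu sig beta lam h * y powr (a - 1)
          + 2 * r / k\<^sup>2 * C4 r mu sig beta lam h * y powr (b - 1) + 1 / (r * beta))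
      else
        (mu - r) / sig\<^sup>2 * (2 * r / k\<^sup>2 * C5 r mu sig beta lam h * y powr (a - 1)
          + 2 * r / k\<^sup>2 * C6 r mu sig beta lam h * y powr (b - 1)))"

end

theory Submission
  imports Defs
begin

text \<open>
  Write Q = 2r/kappa^2, which equals r_i (r_i - 1) for both roots. On the two outer pieces
  v_yy is a combination of y^(r1-2) and y^(r2-2) with coefficients Q C5, Q C6 resp. Q C2, and
  these constants are positive because 1 - r2 = r1 and r2 < 0 < 1 < r1 fix the signs of all
  exponent differences. On the middle piece y^2 v_yy = Q C3 y^r1 + Q C4 y^r2 + y/(r beta)
  rearranges, using y = y^r1 y^r2, into Q C6 y^r2 plus a positive multiple of
  r1 y^r1 (y^r2 - e^(lam r2 beta h)) - r2 y^r2 (y^r1 - e^((lam-1) r1 beta h)),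
  whose two brackets are positive exactly on that piece. Since pi = (mu-r)/sig^2 y v_yy, this
  also gives positivity of the portfolio. Finally v is bounded below on its domain: it is
  continuous on the two compact lower pieces and at least -e^(lam beta h)/(r beta) on the top one.
\<close>

lemma r1_plus_r2: "r1 r mu sig + r2 r mu sig = 1"
  by (simp add: r1_def r2_def field_simps)

lemma r1_gt_1:
  assumes "r > 0" "kap r mu sig \<noteq> 0"
  shows "r1 r mu sig > 1"
  using assms by (simp add: r1_def real_less_rsqrt)

lemma r2_neg:
  assumes "r > 0" "kap r mu sig \<noteq> 0"
  shows "r2 r mu sig < 0"
  using r1_gt_1[OF assms] r1_plus_r2[of r mu sig] by linarith

lemma r1_quadratic:
  assumes "r \<ge> 0"
  shows "r1 r mu sig * (r1 r mu sig - 1) = 2 * r / (kap r mu sig)\<^sup>2"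
proof -
  have "(sqrt (1 + 8 * r / (kap r mu sig)\<^sup>2))\<^sup>2 = 1 + 8 * r / (kap r mu sig)\<^sup>2"
    using assms by simp
  then show ?thesis unfolding r1_def by (simp add: field_simps power2_eq_square)
qed

lemma r2_quadratic:
  assumes "r \<ge> 0"
  shows "r2 r mu sig * (r2 r mu sig - 1) = 2 * r / (kap r mu sig)\<^sup>2"
proof -
  have "(sqrt (1 + 8 * r / (kap r mu sig)\<^sup>2))\<^sup>2 = 1 + 8 * r / (kap r mu sig)\<^sup>2"
    using assms by simp
  then show ?thesis unfolding r2_def by (simp add: field_simps power2_eq_square)
qed

lemma deriv_deriv_eqI:
  fixes f :: "real \<Rightarrow> real"
  assumes "open S" "y \<in> S"
    and "\<And>z. z \<in> S \<Longrightarrow> (f has_real_derivative f' z) (at z)"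
    and "(f' has_real_derivative f'') (at y)"
  shows "deriv (deriv f) y = f''"
proof -
  have "eventually (\<lambda>z. deriv f z = f' z) (nhds y)"
    using eventually_nhds_in_open[OF assms(1,2)]
    by eventually_elim (use assms(3) DERIV_imp_deriv in blast)
  then have "deriv (deriv f) y = deriv f' y" by (rule deriv_cong_ev) simp
  with assms(4) show ?thesis by (simp add: DERIV_imp_deriv)
qed

locale dual_problem =
  fixes r mu sig beta lam :: real
  assumes r_pos: "r > 0" and mu_gt_r: "mu > r" and sig_pos: "sig > 0" and beta_pos: "beta > 0"
    and lam_pos: "lam > 0" and lam_less_1: "lam < 1"
begin

abbreviation "rho1 \<equiv> r1 r mu sig"
abbreviation "rho2 \<equiv> r2 r mu sig"
abbreviation "kappa \<equiv> kap r mu sig"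

lemma kappa_pos: "kappa > 0"
  using mu_gt_r sig_pos by (simp add: kap_def)

lemma rho1_gt_1: "rho1 > 1"
  using r1_gt_1 r_pos kappa_pos by simp

lemma rho2_neg: "rho2 < 0"
  using r2_neg r_pos kappa_pos by simp

lemma rho1_minus_rho2_pos: "rho1 - rho2 > 0"
  using rho1_gt_1 rho2_neg by simp

lemma one_minus_rho1: "1 - rho1 = rho2" and one_minus_rho2: "1 - rho2 = rho1"
  using r1_plus_r2[of r mu sig] by linarith+

lemma rho1_quadratic: "rho1 * (rho1 - 1) = 2 * r / kappa\<^sup>2"
  using r1_quadratic r_pos by simp

lemma rho2_quadratic: "rho2 * (rho2 - 1) = 2 * r / kappa\<^sup>2"
  using r2_quadratic r_pos by simp

lemma C6_pos: "C6 r mu sig beta lam h > 0"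
proof -
  have "lam * rho1 < rho1" using rho1_gt_1 lam_less_1 by simp
  then have "lam * rho1 - (rho1 - rho2) < 0" using rho2_neg by linarith
  then have "lam / (lam * rho1 - (rho1 - rho2)) * exp ((lam * rho1 - (rho1 - rho2)) * beta * h) < 0"
    using lam_pos by (simp add: divide_less_0_iff mult_neg_pos)
  moreover have "1 / rho1 * exp ((lam - 1) * rho1 * beta * h) > 0"
    using rho1_gt_1 by simp
  moreover have "(1 - lam) powr (rho1 - rho2) / ((rho1 - rho2) * beta * r) > 0"
    using rho1_gt_1 rho2_neg lam_less_1 r_pos beta_pos by simp
  ultimately show ?thesis
    unfolding C6_def Let_def one_minus_rho2 by (intro mult_pos_pos) linarith+
qed

lemma C5_pos:
  assumes "h > 0"
  shows "C5 r mu sig beta lam h > 0"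
proof -
  have "rho2 * beta * h < 0"
    using rho2_neg beta_pos assms by (simp add: mult_neg_pos)
  moreover have "(lam - 1) * rho2 * beta * h = lam * rho2 * beta * h - rho2 * beta * h"
    by (simp add: algebra_simps)
  ultimately have "exp ((lam - 1) * rho2 * beta * h) - exp (lam * rho2 * beta * h) > 0"
    by simp
  moreover have "rho1 * kappa\<^sup>2 / (2 * (rho1 - rho2) * beta * r\<^sup>2) > 0"
    using kappa_pos rho1_gt_1 rho2_neg beta_pos r_pos by simp
  ultimately show ?thesis
    unfolding C5_def Let_def one_minus_rho1 one_minus_rho2 by (rule mult_pos_pos[rotated])
qed

lemma C2_pos:
  assumes "h > 0"
  shows "C2 r mu sig beta lam h > 0"
proof -
  have "exp ((lam - 1) * rho1 * beta * h) - exp (lam * rho1 * beta * h) < 0"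
    using rho1_gt_1 beta_pos assms by simp
  moreover have "rho2 * kappa\<^sup>2 / (2 * (rho1 - rho2) * beta * r\<^sup>2) < 0"
    using kappa_pos rho1_gt_1 rho2_neg beta_pos r_pos by (simp add: divide_neg_pos mult_neg_pos)
  ultimately show ?thesis
    unfolding C2_def Let_def one_minus_rho1 one_minus_rho2
    using C6_pos by (intro add_pos_pos mult_neg_neg)
qed

lemma C3_scaled:
  "C3 r mu sig beta lam h * (2 * r / kappa\<^sup>2)
     = - rho1 * exp (lam * rho2 * beta * h) / ((rho1 - rho2) * beta * r)"
proof -
  have "rho2 - 1 = - rho1" using one_minus_rho2 by simp
  then show ?thesis
    unfolding C3_def Let_def one_minus_rho1 \<open>rho2 - 1 = - rho1\<close>
    using kappa_pos r_pos beta_pos rho1_minus_rho2_pos by (simp add: field_simps power2_eq_square)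
qed

lemma C4_scaled:
  "C4 r mu sig beta lam h * (2 * r / kappa\<^sup>2)
     = C6 r mu sig beta lam h * (2 * r / kappa\<^sup>2)
       + rho2 * exp ((lam - 1) * rho1 * beta * h) / ((rho1 - rho2) * beta * r)"
  unfolding C4_def Let_def one_minus_rho1 one_minus_rho2
  using kappa_pos r_pos beta_pos rho1_minus_rho2_pos by (simp add: field_simps power2_eq_square)

lemma vB_deriv2_numerator_pos:
  assumes "exp ((lam - 1) * beta * h) < y" "y < exp (lam * beta * h)"
  shows "C3 r mu sig beta lam h * (2 * r / kappa\<^sup>2) * y powr rho1
       + C4 r mu sig beta lam h * (2 * r / kappa\<^sup>2) * y powr rho2 + y / (r * beta) > 0"
proof -
  define e1 where "e1 = exp (lam * rho2 * beta * h)"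
  define e2 where "e2 = exp ((lam - 1) * rho1 * beta * h)"
  define D where "D = (rho1 - rho2) * beta * r"
  have y: "y > 0" using assms(1) exp_gt_zero less_trans by blast
  have D: "D > 0" unfolding D_def using rho1_minus_rho2_pos beta_pos r_pos by simp
  have ln_y: "(lam - 1) * beta * h < ln y" "ln y < lam * beta * h"
    using assms y by (metis exp_gt_zero ln_exp ln_less_cancel_iff)+
  have "e1 < y powr rho2"
    unfolding e1_def powr_def using y ln_y(2) rho2_neg by (simp add: mult.commute mult.left_commute)
  moreover have "e2 < y powr rho1"
    unfolding e2_def powr_def using y ln_y(1) rho1_gt_1 by (simp add: mult.commute mult.left_commute)
  moreover have y_split: "y = y powr rho1 * y powr rho2"
    using y r1_plus_r2[of r mu sig] by (simp add: powr_add[symmetric])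
  ultimately have num: "rho1 * y powr rho1 * (y powr rho2 - e1) + (- rho2) * y powr rho2 * (y powr rho1 - e2) > 0"
    using y rho1_gt_1 rho2_neg by (intro add_pos_pos mult_pos_pos) auto
  have "C6 r mu sig beta lam h * (2 * r / kappa\<^sup>2) * y powr rho2 > 0"
    using C6_pos r_pos kappa_pos y by simp
  then have "C6 r mu sig beta lam h * (2 * r / kappa\<^sup>2) * y powr rho2
      + (rho1 * y powr rho1 * (y powr rho2 - e1) + (- rho2) * y powr rho2 * (y powr rho1 - e2)) / D > 0"
    using num D by (meson add_pos_pos divide_pos_pos)
  also have "\<dots> = C3 r mu sig beta lam h * (2 * r / kappa\<^sup>2) * y powr rho1
       + C4 r mu sig beta lam h * (2 * r / kappa\<^sup>2) * y powr rho2 + y / (r * beta)"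
  proof -
    have y_scaled: "y / (r * beta) = (rho1 - rho2) * y powr rho1 * y powr rho2 / D"
      unfolding D_def using rho1_minus_rho2_pos r_pos beta_pos
      by (subst y_split) (simp add: field_simps)
    show ?thesis
      unfolding C3_scaled C4_scaled e1_def[symmetric] e2_def[symmetric] D_def[symmetric] y_scaled
      using D by (simp add: field_simps)
  qed
  finally show ?thesis .
qed

lemma deriv2_vA:
  assumes "y > 0"
  shows "deriv (deriv (vA r mu sig beta lam h)) y
    = C2 r mu sig beta lam h * (2 * r / kappa\<^sup>2) * y powr (rho2 - 2)"
  unfolding rho2_quadratic[symmetric]
proof (rule deriv_deriv_eqI[of "{0<..}"])
  show "(vA r mu sig beta lam h has_real_derivative
      C2 r mu sig beta lam h * rho2 * z powr (rho2 - 1)) (at z)" if "z \<in> {0<..}" for z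
    unfolding vA_def using that by (auto intro!: derivative_eq_intros)
  show "((\<lambda>z. C2 r mu sig beta lam h * rho2 * z powr (rho2 - 1)) has_real_derivative
      C2 r mu sig beta lam h * (rho2 * (rho2 - 1)) * y powr (rho2 - 2)) (at y)"
    using assms by (auto intro!: derivative_eq_intros)
qed (use assms in auto)

lemma deriv2_vB:
  assumes "y > 0"
  shows "deriv (deriv (vB r mu sig beta lam h)) y
    = (C3 r mu sig beta lam h * (2 * r / kappa\<^sup>2) * y powr rho1
       + C4 r mu sig beta lam h * (2 * r / kappa\<^sup>2) * y powr rho2 + y / (r * beta)) / y\<^sup>2"
proof -
  have "deriv (deriv (vB r mu sig beta lam h)) y =
    C3 r mu sig beta lam h * (rho1 * (rho1 - 1)) * y powr (rho1 - 2)
    + C4 r mu sig beta lam h * (rho2 * (rho2 - 1)) * y powr (rho2 - 2) + 1 / (r * beta * y)"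
  proof (rule deriv_deriv_eqI[of "{0<..}"])
    show "(vB r mu sig beta lam h has_real_derivative
       C3 r mu sig beta lam h * rho1 * z powr (rho1 - 1)
      + C4 r mu sig beta lam h * rho2 * z powr (rho2 - 1)
      + (ln z - lam * beta * h + kappa\<^sup>2 / (2 * r)) / (r * beta)) (at z)" if "z \<in> {0<..}" for z
      unfolding vB_def using that r_pos beta_pos
      by (auto intro!: derivative_eq_intros simp: field_simps)
    show "((\<lambda>z. C3 r mu sig beta lam h * rho1 * z powr (rho1 - 1)
      + C4 r mu sig beta lam h * rho2 * z powr (rho2 - 1)
      + (ln z - lam * beta * h + kappa\<^sup>2 / (2 * r)) / (r * beta)) has_real_derivative
      C3 r mu sig beta lam h * (rho1 * (rho1 - 1)) * y powr (rho1 - 2)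
      + C4 r mu sig beta lam h * (rho2 * (rho2 - 1)) * y powr (rho2 - 2)
      + 1 / (r * beta * y)) (at y)"
      using assms r_pos beta_pos by (auto intro!: derivative_eq_intros simp: field_simps)
  qed (use assms in auto)
  also have "\<dots> = (C3 r mu sig beta lam h * (2 * r / kappa\<^sup>2) * y powr rho1
       + C4 r mu sig beta lam h * (2 * r / kappa\<^sup>2) * y powr rho2 + y / (r * beta)) / y\<^sup>2"
    unfolding rho1_quadratic rho2_quadratic using assms
    by (simp add: powr_diff field_simps power2_eq_square)
  finally show ?thesis .
qed

lemma deriv2_vC:
  assumes "y > 0"
  shows "deriv (deriv (vC r mu sig beta lam h)) y
    = C5 r mu sig beta lam h * (2 * r / kappa\<^sup>2) * y powr (rho1 - 2)
      + C6 r mu sig beta lam h * (2 * r / kappa\<^sup>2) * y powr (rho2 - 2)"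
proof -
  have "deriv (deriv (vC r mu sig beta lam h)) y
    = C5 r mu sig beta lam h * (rho1 * (rho1 - 1)) * y powr (rho1 - 2)
      + C6 r mu sig beta lam h * (rho2 * (rho2 - 1)) * y powr (rho2 - 2)"
  proof (rule deriv_deriv_eqI[of "{0<..}"])
    show "(vC r mu sig beta lam h has_real_derivative
       C5 r mu sig beta lam h * rho1 * z powr (rho1 - 1)
      + C6 r mu sig beta lam h * rho2 * z powr (rho2 - 1) - h / r) (at z)" if "z \<in> {0<..}" for z
      unfolding vC_def using that r_pos by (auto intro!: derivative_eq_intros)
    show "((\<lambda>z. C5 r mu sig beta lam h * rho1 * z powr (rho1 - 1)
      + C6 r mu sig beta lam h * rho2 * z powr (rho2 - 1) - h / r) has_real_derivative
      C5 r mu sig beta lam h * (rho1 * (rho1 - 1)) * y powr (rho1 - 2)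
      + C6 r mu sig beta lam h * (rho2 * (rho2 - 1)) * y powr (rho2 - 2)) (at y)"
      using assms by (auto intro!: derivative_eq_intros)
  qed (use assms in auto)
  then show ?thesis unfolding rho1_quadratic rho2_quadratic .
qed

lemma vA_deriv2_pos:
  assumes "h > 0" "y > 0"
  shows "deriv (deriv (vA r mu sig beta lam h)) y > 0"
  unfolding deriv2_vA[OF assms(2)] using C2_pos[OF assms(1)] r_pos kappa_pos assms(2) by simp

lemma vB_deriv2_pos:
  assumes "exp ((lam - 1) * beta * h) < y" "y < exp (lam * beta * h)"
  shows "deriv (deriv (vB r mu sig beta lam h)) y > 0"
proof -
  have "y > 0" using assms(1) exp_gt_zero less_trans by blast
  then show ?thesis unfolding deriv2_vB[OF \<open>y > 0\<close>] using vB_deriv2_numerator_pos[OF assms] by simp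
qed

lemma vC_deriv2_pos:
  assumes "h > 0" "y > 0"
  shows "deriv (deriv (vC r mu sig beta lam h)) y > 0"
  unfolding deriv2_vC[OF assms(2)] using C5_pos[OF assms(1)] C6_pos r_pos kappa_pos assms(2)
  by (intro add_pos_pos) simp_all

lemma pidag_eq_deriv2:
  assumes "y > 0"
  shows "pidag r mu sig beta lam y h = (mu - r) / sig\<^sup>2 * y *
    (if exp (lam * beta * h) \<le> y then deriv (deriv (vA r mu sig beta lam h)) y
     else if exp ((lam - 1) * beta * h) < y then deriv (deriv (vB r mu sig beta lam h)) y
     else deriv (deriv (vC r mu sig beta lam h)) y)"
  unfolding pidag_def Let_def deriv2_vA[OF assms] deriv2_vB[OF assms] deriv2_vC[OF assms]
  using assms r_pos beta_pos kappa_pos by (simp add: powr_diff power2_eq_square, simp add: field_simps)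

lemma pidag_pos:
  assumes "h > 0" "(1 - lam) * exp ((lam - 1) * beta * h) \<le> y"
  shows "pidag r mu sig beta lam y h > 0"
proof -
  have "(1 - lam) * exp ((lam - 1) * beta * h) > 0" using lam_less_1 by simp
  then have y: "y > 0" using assms(2) by linarith
  have "(if exp (lam * beta * h) \<le> y then deriv (deriv (vA r mu sig beta lam h)) y
     else if exp ((lam - 1) * beta * h) < y then deriv (deriv (vB r mu sig beta lam h)) y
     else deriv (deriv (vC r mu sig beta lam h)) y) > 0"
    using assms(1) y by (simp add: not_le vA_deriv2_pos vB_deriv2_pos vC_deriv2_pos)
  moreover have "(mu - r) / sig\<^sup>2 * y > 0" using mu_gt_r sig_pos y by simp
  ultimately show ?thesis unfolding pidag_eq_deriv2[OF y] by (metis mult_pos_pos)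
qed

lemma vdual_bdd_below:
  assumes "h > 0"
  shows "bdd_below ((\<lambda>y. vdual r mu sig beta lam y h) ` {(1 - lam) * exp ((lam - 1) * beta * h)..})"
proof -
  define lo where "lo = (1 - lam) * exp ((lam - 1) * beta * h)"
  define m where "m = exp ((lam - 1) * beta * h)"
  define M where "M = exp (lam * beta * h)"
  have lo: "lo > 0" unfolding lo_def using lam_less_1 by simp
  have "(\<lambda>y. vdual r mu sig beta lam y h) ` {lo..}
    \<subseteq> vA r mu sig beta lam h ` {M..} \<union> vB r mu sig beta lam h ` {m..M}
      \<union> vC r mu sig beta lam h ` {lo..m}"
    unfolding vdual_def m_def M_def by (auto simp: not_le)
  moreover have "bdd_below (vA r mu sig beta lam h ` {M..})"
  proof (rule bdd_belowI2)
    show "- 1 / (r * beta) * exp (lam * beta * h) \<le> vA r mu sig beta lam h y" if "y \<in> {M..}" for y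
      using C2_pos[OF assms] unfolding vA_def by simp
  qed
  moreover have "bdd_below (f ` {a..b})" if "continuous_on {a..b} f" for f :: "real \<Rightarrow> real" and a b
    by (rule bounded_imp_bdd_below[OF compact_imp_bounded[OF compact_continuous_image[OF that]]]) simp
  moreover have "continuous_on {m..M} (vB r mu sig beta lam h)"
    unfolding vB_def using lo m_def r_pos beta_pos by (intro continuous_intros) auto
  moreover have "continuous_on {lo..m} (vC r mu sig beta lam h)"
    unfolding vC_def using lo by (intro continuous_intros) auto
  ultimately show ?thesis unfolding lo_def[symmetric] by (meson bdd_below_Un bdd_below_mono)
qed

lemma vdual_plus_linear_bdd_below:
  assumes "h > 0" "x \<ge> 0"
  shows "bdd_below ((\<lambda>y. vdual r mu sig beta lam y h + x * y) `
    {(1 - lam) * exp ((lam - 1) * beta * h)..})"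
proof -
  obtain K where K: "\<And>y. (1 - lam) * exp ((lam - 1) * beta * h) \<le> y \<Longrightarrow> K \<le> vdual r mu sig beta lam y h"
    using vdual_bdd_below[OF assms(1)] by (auto simp: bdd_below_def)
  show ?thesis
  proof (rule bdd_belowI2)
    fix y assume y: "y \<in> {(1 - lam) * exp ((lam - 1) * beta * h)..}"
    moreover have "(1 - lam) * exp ((lam - 1) * beta * h) > 0" using lam_less_1 by simp
    ultimately have "x * y \<ge> 0" using assms(2) by simp
    then show "K \<le> vdual r mu sig beta lam y h + x * y"
      using K y by fastforce
  qed
qed

end

theorem lemma3p1:
  fixes r mu sig beta lam h :: real
  assumes "r > 0" "mu > r" "sig > 0" "beta > 0" "0 < lam" "lam < 1" "h > 0"
  shows "(\<forall>y. exp (lam * beta * h) \<le> y \<longrightarrow>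
            deriv (deriv (vA r mu sig beta lam h)) y > 0)
       \<and> (\<forall>y. exp ((lam - 1) * beta * h) < y \<and> y < exp (lam * beta * h) \<longrightarrow>
            deriv (deriv (vB r mu sig beta lam h)) y > 0)
       \<and> (\<forall>y. (1 - lam) * exp ((lam - 1) * beta * h) \<le> y \<and> y \<le> exp ((lam - 1) * beta * h) \<longrightarrow>
            deriv (deriv (vC r mu sig beta lam h)) y > 0)
       \<and> (\<forall>x>0. bdd_below ((\<lambda>y. vdual r mu sig beta lam y h + x * y) `
                 {(1 - lam) * exp ((lam - 1) * beta * h)..}))
       \<and> (\<forall>y. (1 - lam) * exp ((lam - 1) * beta * h) \<le> y \<longrightarrow>
            pidag r mu sig beta lam y h > 0)"
proof -
  interpret dual_problem r mu sig beta lam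
    using assms by unfold_locales
  have lower_pos: "(1 - lam) * exp ((lam - 1) * beta * h) > 0"
    using assms(6) by simp
  show ?thesis
  proof (intro conjI allI impI)
    show "deriv (deriv (vA r mu sig beta lam h)) y > 0" if "exp (lam * beta * h) \<le> y" for y
      using vA_deriv2_pos[OF assms(7)] that by (meson exp_gt_zero less_le_trans)
    show "deriv (deriv (vB r mu sig beta lam h)) y > 0"
      if "exp ((lam - 1) * beta * h) < y \<and> y < exp (lam * beta * h)" for y
      using vB_deriv2_pos that by blast
    show "deriv (deriv (vC r mu sig beta lam h)) y > 0"
      if "(1 - lam) * exp ((lam - 1) * beta * h) \<le> y \<and> y \<le> exp ((lam - 1) * beta * h)" for y
      using vC_deriv2_pos[OF assms(7)] that lower_pos by simp
    show "bdd_below ((\<lambda>y. vdual r mu sig beta lam y h + x * y) `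
        {(1 - lam) * exp ((lam - 1) * beta * h)..})" if "x > 0" for x
      using vdual_plus_linear_bdd_below[OF assms(7)] that by simp
    show "pidag r mu sig beta lam y h > 0" if "(1 - lam) * exp ((lam - 1) * beta * h) \<le> y" for y
      using pidag_pos[OF assms(7) that] .
  qed
qed

end
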